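(* Let $G$ be a locally compact abelian group (written additively) not reduced to its neutral element, $E$ an $\mathbb{R}$-group, and $\mathcal{H}=(H_\varepsilon)_{\varepsilon\in E}$ a continuous absorptive action of $E$ on $G$ compatible with the group operation ($H_\varepsilon(x+y)=H_\varepsilon(x)+H_\varepsilon(y)$). For $\varepsilon\in E$ let $\widehat H_\varepsilon:\widehat G\to\widehat G$ be defined by $\langle\widehat H_\varepsilon(\gamma),x\rangle=\langle\gamma,H_\varepsilon(x)\rangle$ ($\gamma\in\widehat G$, $x\in G$). Then $\widehat{\mathcal{H}}=(\widehat H_\varepsilon)_{\varepsilon\in E}$ is a continuous absorptive action of $E$ on $\widehat G$.
   Context: $\widehat G$ is the dual group of $G$ (continuous homomorphisms $G\to\{z\in\mathbb{C}:|z|=1\}$) with pointwise multiplication and the topology of compact convergence; $\langle\gamma,x\rangle$ is the value of $\gamma$ at $x$. An $\mathbb{R}$-group is an abelian group $E$ (operation written multiplicatively) whose underlying set is a subset of $\mathbb{R}$ containing all positive integers, such that: (RG1) with the natural order of $\mathbb{R}$, $E$ is a totally ordered group; (RG2) with the topology induced from $\mathbb{R}$, $E$ is a locally compact group; (RG3) there is a nonconstant continuous homomorphism $h:E\to\mathbb{R}_+^*$ such that for every $\alpha\in E$ the set $\{\varepsilon\in E:\varepsilon\ge\alpha\}$ is integrable for $h\cdot m$, $m$ a Haar measure on $E$. $e$ is the identity of $E$, $\varepsilon^{-1}$ the group inverse; inequalities refer to the order of $\mathbb{R}$. An action of $E$ on a space $X$ is a family $(H_\varepsilon)_{\varepsilon\in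 E}$ of bijections of $X$ with $H_\varepsilon\circ H_{\varepsilon'}=H_{\varepsilon\varepsilon'}$, $H_e=\mathrm{id}_X$; continuous if $(\varepsilon,x)\mapsto H_\varepsilon(x)$ is continuous on $E\times X$; absorptive if some $\omega\in X$ satisfies: for every neighbourhood $V$ of $\omega$ and every $x\in X$ there are a neighbourhood $U$ of $x$ and $\alpha\in E$ with $H_{\varepsilon^{-1}}(U)\subset V$ for all $\varepsilon\le\alpha$. *)

theory Defs
  imports "HOL-Probability.Probability" "HOL-Algebra.Group"
begin

text \<open>Haar measure on an R-group E (a subset of the reals with its own group law):
  a Borel measure on the carrier, invariant under translations, finite on compact sets
  and positive on nonempty open sets.  (The carrier is a second countable locally compact
  Hausdorff space, so such measures are automatically Radon.)\<close>
definition haar_measure :: "real monoid \<Rightarrow> real measure \<Rightarrow> bool" where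
  "haar_measure E m \<longleftrightarrow>
     sets m = sets (restrict_space borel (carrier E)) \<and>
     (\<forall>a\<in>carrier E. \<forall>A\<in>sets m. emeasure m ((\<lambda>x. a \<otimes>\<^bsub>E\<^esub> x) ` A) = emeasure m A) \<and>
     (\<forall>K. compact K \<and> K \<subseteq> carrier E \<longrightarrow> emeasure m K < \<infinity>) \<and>
     (\<forall>U. openin (top_of_set (carrier E)) U \<and> U \<noteq> {} \<longrightarrow> emeasure m U > 0)"

definition R_group :: "real monoid \<Rightarrow> bool" where
  "R_group E \<longleftrightarrow>
     comm_group E \<and>
     {real n | n. n \<ge> 1} \<subseteq> carrier E \<and>
     \<comment> \<open>(RG1) totally ordered group w.r.t. the natural order of the reals\<close>
     (\<forall>a\<in>carrier E. \<forall>b\<in>carrier E. \<forall>c\<in>carrier E.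
         a \<le> b \<longrightarrow> a \<otimes>\<^bsub>E\<^esub> c \<le> b \<otimes>\<^bsub>E\<^esub> c) \<and>
     \<comment> \<open>(RG2) locally compact topological group for the induced topology\<close>
     continuous_on (carrier E \<times> carrier E) (\<lambda>(a, b). a \<otimes>\<^bsub>E\<^esub> b) \<and>
     continuous_on (carrier E) (\<lambda>a. inv\<^bsub>E\<^esub> a) \<and>
     locally_compact_space (top_of_set (carrier E)) \<and>
     \<comment> \<open>(RG3)\<close>
     (\<exists>h :: real \<Rightarrow> real.
         continuous_on (carrier E) h \<and>
         (\<forall>a\<in>carrier E. h a > 0) \<and>
         (\<forall>a\<in>carrier E. \<forall>b\<in>carrier E. h (a \<otimes>\<^bsub>E\<^esub> b) = h a * h b) \<and>
         (\<exists>a\<in>carrier E. \<exists>b\<in>carrier E. h a \<noteq> h b) \<and>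
         (\<exists>m. haar_measure E m \<and>
              (\<forall>\<alpha>\<in>carrier E.
                 emeasure (density m (\<lambda>x. ennreal (h x))) {\<epsilon>\<in>carrier E. \<epsilon> \<ge> \<alpha>} < \<infinity>)))"

definition is_action :: "real monoid \<Rightarrow> 'x topology \<Rightarrow> (real \<Rightarrow> 'x \<Rightarrow> 'x) \<Rightarrow> bool" where
  "is_action E X H \<longleftrightarrow>
     (\<forall>\<epsilon>\<in>carrier E. bij_betw (H \<epsilon>) (topspace X) (topspace X)) \<and>
     (\<forall>\<epsilon>\<in>carrier E. \<forall>\<epsilon>'\<in>carrier E. \<forall>x\<in>topspace X. H \<epsilon> (H \<epsilon>' x) = H (\<epsilon> \<otimes>\<^bsub>E\<^esub> \<epsilon>') x) \<and>
     (\<forall>x\<in>topspace X. H \<one>\<^bsub>E\<^esub> x = x)"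

definition continuous_action :: "real monoid \<Rightarrow> 'x topology \<Rightarrow> (real \<Rightarrow> 'x \<Rightarrow> 'x) \<Rightarrow> bool" where
  "continuous_action E X H \<longleftrightarrow> is_action E X H \<and>
     continuous_map (prod_topology (top_of_set (carrier E)) X) X (\<lambda>(\<epsilon>, x). H \<epsilon> x)"

definition absorptive_action :: "real monoid \<Rightarrow> 'x topology \<Rightarrow> (real \<Rightarrow> 'x \<Rightarrow> 'x) \<Rightarrow> bool" where
  "absorptive_action E X H \<longleftrightarrow> is_action E X H \<and>
     (\<exists>\<omega>\<in>topspace X. \<forall>V. (\<exists>W. openin X W \<and> \<omega> \<in> W \<and> W \<subseteq> V) \<and> V \<subseteq> topspace X \<longrightarrow>
        (\<forall>x\<in>topspace X. \<exists>U \<alpha>. (\<exists>W. openin X W \<and> x \<in> W \<and> W \<subseteq> U) \<and> U \<subseteq> topspace X \<and>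
            \<alpha> \<in> carrier E \<and>
            (\<forall>\<epsilon>\<in>carrier E. \<epsilon> \<le> \<alpha> \<longrightarrow> H (inv\<^bsub>E\<^esub> \<epsilon>) ` U \<subseteq> V)))"

definition dual_group :: "('g::topological_ab_group_add \<Rightarrow> complex) set" where
  "dual_group = {\<gamma>. continuous_on UNIV \<gamma> \<and> (\<forall>x y. \<gamma> (x + y) = \<gamma> x * \<gamma> y) \<and>
                     (\<forall>x. cmod (\<gamma> x) = 1)}"

definition dual_topology :: "('g::topological_ab_group_add \<Rightarrow> complex) topology" where
  "dual_topology = topology (\<lambda>U. U \<subseteq> dual_group \<and>
     (\<forall>\<gamma>\<in>U. \<exists>K e. compact K \<and> e > 0 \<and>
        {\<psi>\<in>dual_group. \<forall>x\<in>K. cmod (\<psi> x - \<gamma> x) < e} \<subseteq> U))"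

end

theory Submission
  imports Defs
begin

(* Then three
   independent statements about the dual action  g |-> g o H eps  are proved:
   (1) it is an action (this needs E commutative, since composition with H reverses
   the order of the factors); (2) it is jointly continuous, because for eps near
   eps0 the points H eps x with x in K stay in one compact set and move uniformly
   little (local compactness of E and the tube lemma); (3) it is absorptive, because
   an additive absorptive action must absorb towards 0, hence absorbs every compact
   set into any neighbourhood of 0 uniformly, and a character that is close to 1
   near 0 is pulled back to one close to 1 on K. *)

definition dual_nbhd ::
    "('g::topological_ab_group_add \<Rightarrow> complex) \<Rightarrow> 'g set \<Rightarrow> real \<Rightarrow> ('g \<Rightarrow> complex) set" where
  "dual_nbhd \<gamma> K e = {\<psi>\<in>dual_group. \<forall>x\<in>K. cmod (\<psi> x - \<gamma> x) < e}"

lemma dual_topology_istopology: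
  "istopology (\<lambda>U. U \<subseteq> (dual_group :: ('g::topological_ab_group_add \<Rightarrow> complex) set) \<and>
     (\<forall>\<gamma>\<in>U. \<exists>K e. compact K \<and> e > 0 \<and> dual_nbhd \<gamma> K e \<subseteq> U))"
  unfolding istopology_def
proof (rule conjI; intro allI impI)
  fix S T :: "('g \<Rightarrow> complex) set"
  assume S: "S \<subseteq> dual_group \<and> (\<forall>\<gamma>\<in>S. \<exists>K e. compact K \<and> e > 0 \<and> dual_nbhd \<gamma> K e \<subseteq> S)"
    and T: "T \<subseteq> dual_group \<and> (\<forall>\<gamma>\<in>T. \<exists>K e. compact K \<and> e > 0 \<and> dual_nbhd \<gamma> K e \<subseteq> T)"
  show "S \<inter> T \<subseteq> dual_group \<and> (\<forall>\<gamma>\<in>S \<inter> T. \<exists>K e. compact K \<and> e > 0 \<and> dual_nbhd \<gamma> K e \<subseteq> S \<inter> T)"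
  proof (intro conjI ballI)
    show "S \<inter> T \<subseteq> dual_group" using S by blast
    fix \<gamma> assume "\<gamma> \<in> S \<inter> T"
    then obtain K1 e1 K2 e2 where "compact K1" "e1 > 0" "dual_nbhd \<gamma> K1 e1 \<subseteq> S"
        "compact K2" "e2 > 0" "dual_nbhd \<gamma> K2 e2 \<subseteq> T"
      using S T by blast
    then show "\<exists>K e. compact K \<and> e > 0 \<and> dual_nbhd \<gamma> K e \<subseteq> S \<inter> T"
      by (intro exI[of _ "K1 \<union> K2"] exI[of _ "min e1 e2"]) (auto simp: dual_nbhd_def)
  qed
next
  fix \<K> :: "('g \<Rightarrow> complex) set set"
  assume "\<forall>K\<in>\<K>. K \<subseteq> dual_group \<and> (\<forall>\<gamma>\<in>K. \<exists>K' e. compact K' \<and> e > 0 \<and> dual_nbhd \<gamma> K' e \<subseteq> K)"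
  then show "\<Union>\<K> \<subseteq> dual_group \<and> (\<forall>\<gamma>\<in>\<Union>\<K>. \<exists>K e. compact K \<and> e > 0 \<and> dual_nbhd \<gamma> K e \<subseteq> \<Union>\<K>)"
    by (meson Sup_upper2 Union_least UnionE)
qed

lemma openin_dual_topology:
  "openin dual_topology U \<longleftrightarrow>
     U \<subseteq> dual_group \<and> (\<forall>\<gamma>\<in>U. \<exists>K e. compact K \<and> e > 0 \<and> dual_nbhd \<gamma> K e \<subseteq> U)"
proof -
  have "openin dual_topology = (\<lambda>U. U \<subseteq> (dual_group :: ('a \<Rightarrow> complex) set) \<and>
          (\<forall>\<gamma>\<in>U. \<exists>K e. compact K \<and> e > 0 \<and> dual_nbhd \<gamma> K e \<subseteq> U))"
    unfolding dual_topology_def dual_nbhd_def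
    by (rule topology_inverse'[OF dual_topology_istopology[unfolded dual_nbhd_def]])
  then show ?thesis by simp
qed

lemma topspace_dual_topology: "topspace dual_topology = dual_group"
proof
  show "topspace dual_topology \<subseteq> dual_group"
    using openin_dual_topology openin_topspace by blast
  have "openin dual_topology dual_group"
    unfolding openin_dual_topology dual_nbhd_def by (auto intro!: exI[of _ "{}"] exI[of _ 1])
  then show "dual_group \<subseteq> topspace dual_topology"
    by (rule openin_subset)
qed

(* Basic neighbourhoods are open: a character uniformly (e - d)-close on K to a
   character whose maximal distance from gamma on K is d < e lies in dual_nbhd gamma K e. *)
lemma dual_nbhd_openin:
  assumes \<gamma>: "\<gamma> \<in> dual_group" and K: "compact K" and e: "e > 0"
  shows "openin dual_topology (dual_nbhd \<gamma> K e)" and "\<gamma> \<in> dual_nbhd \<gamma> K e"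
proof -
  show "\<gamma> \<in> dual_nbhd \<gamma> K e" using \<gamma> e by (simp add: dual_nbhd_def)
  show "openin dual_topology (dual_nbhd \<gamma> K e)"
    unfolding openin_dual_topology
  proof (intro conjI ballI)
    show "dual_nbhd \<gamma> K e \<subseteq> dual_group" by (auto simp: dual_nbhd_def)
    fix \<psi> assume \<psi>: "\<psi> \<in> dual_nbhd \<gamma> K e"
    show "\<exists>K' e'. compact K' \<and> e' > 0 \<and> dual_nbhd \<psi> K' e' \<subseteq> dual_nbhd \<gamma> K e"
    proof (cases "K = {}")
      case True then show ?thesis using \<psi> e by (auto simp: dual_nbhd_def)
    next
      case False
      have "continuous_on K (\<lambda>x. cmod (\<psi> x - \<gamma> x))"
        using \<psi> \<gamma> by (auto simp: dual_nbhd_def dual_group_def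
            intro!: continuous_intros intro: continuous_on_subset)
      then obtain x0 where x0: "x0 \<in> K" "\<forall>x\<in>K. cmod (\<psi> x - \<gamma> x) \<le> cmod (\<psi> x0 - \<gamma> x0)"
        using continuous_attains_sup[OF K False] by blast
      define d where "d = cmod (\<psi> x0 - \<gamma> x0)"
      have "d < e" using \<psi> x0 by (auto simp: dual_nbhd_def d_def)
      moreover have "dual_nbhd \<psi> K (e - d) \<subseteq> dual_nbhd \<gamma> K e"
      proof
        fix \<phi> assume \<phi>: "\<phi> \<in> dual_nbhd \<psi> K (e - d)"
        have "cmod (\<phi> x - \<gamma> x) < e" if "x \<in> K" for x
        proof -
          have "cmod (\<phi> x - \<gamma> x) \<le> cmod (\<phi> x - \<psi> x) + cmod (\<psi> x - \<gamma> x)"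
            using norm_triangle_ineq[of "\<phi> x - \<psi> x" "\<psi> x - \<gamma> x"] by simp
          also have "\<dots> < e" using \<phi> x0 that by (force simp: dual_nbhd_def d_def)
          finally show ?thesis .
        qed
        then show "\<phi> \<in> dual_nbhd \<gamma> K e" using \<phi> by (auto simp: dual_nbhd_def)
      qed
      ultimately show ?thesis using K by (intro exI[of _ K] exI[of _ "e - d"]) auto
    qed
  qed
qed

(* A character takes the value 1 at 0: it is multiplicative and never 0. *)
lemma dual_group_zero: "\<gamma> \<in> dual_group \<Longrightarrow> \<gamma> 0 = 1"
proof -
  assume "\<gamma> \<in> dual_group"
  then have "\<gamma> 0 * \<gamma> 0 = \<gamma> 0 * 1" and "cmod (\<gamma> 0) = 1"
    unfolding dual_group_def by (metis (mono_tags, lifting) add_0 mem_Collect_eq mult_1_right)+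
  then show ?thesis by (metis mult_left_cancel norm_zero zero_neq_one)
qed

lemma const_one_dual_group: "(\<lambda>_. 1) \<in> dual_group"
  by (auto simp: dual_group_def)

lemma dual_group_comp:
  assumes "\<gamma> \<in> dual_group" "continuous_on UNIV h" "\<And>x y. h (x + y) = h x + h y"
  shows "\<gamma> \<circ> h \<in> dual_group"
  using assms unfolding dual_group_def by (auto intro: continuous_on_compose2)

(* Composition with H reverses the order of the factors, so commutativity of E is
   what makes the dual family an action. *)
lemma dual_action_is_action:
  fixes H :: "real \<Rightarrow> 'g::topological_ab_group_add \<Rightarrow> 'g"
  assumes "comm_group E" and act: "is_action E euclidean H"
    and dual: "\<And>\<epsilon> \<gamma>. \<epsilon> \<in> carrier E \<Longrightarrow> \<gamma> \<in> dual_group \<Longrightarrow> \<gamma> \<circ> H \<epsilon> \<in> dual_group"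
  shows "is_action E dual_topology (\<lambda>\<epsilon> \<gamma>. \<gamma> \<circ> H \<epsilon>)"
proof -
  interpret E: comm_group E by fact
  have comp: "\<And>\<epsilon> \<epsilon>' x. \<epsilon> \<in> carrier E \<Longrightarrow> \<epsilon>' \<in> carrier E \<Longrightarrow> H \<epsilon> (H \<epsilon>' x) = H (\<epsilon> \<otimes>\<^bsub>E\<^esub> \<epsilon>') x"
    and one: "\<And>x. H \<one>\<^bsub>E\<^esub> x = x"
    using act by (auto simp: is_action_def)
  show ?thesis
    unfolding is_action_def topspace_dual_topology
  proof (intro conjI ballI)
    fix \<epsilon> assume \<epsilon>: "\<epsilon> \<in> carrier E"
    then have \<epsilon>': "inv\<^bsub>E\<^esub> \<epsilon> \<in> carrier E" by simp
    show "bij_betw (\<lambda>\<gamma>. \<gamma> \<circ> H \<epsilon>) dual_group dual_group"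
    proof (rule bij_betwI[where g = "\<lambda>\<gamma>. \<gamma> \<circ> H (inv\<^bsub>E\<^esub> \<epsilon>)"])
      fix \<gamma>
      show "\<gamma> \<circ> H \<epsilon> \<circ> H (inv\<^bsub>E\<^esub> \<epsilon>) = \<gamma>" and "\<gamma> \<circ> H (inv\<^bsub>E\<^esub> \<epsilon>) \<circ> H \<epsilon> = \<gamma>"
        by (simp_all add: fun_eq_iff comp[OF \<epsilon> \<epsilon>'] comp[OF \<epsilon>' \<epsilon>] one \<epsilon>)
    qed (use dual \<epsilon> \<epsilon>' in blast)+
  next
    fix \<epsilon> \<epsilon>' \<gamma> assume "\<epsilon> \<in> carrier E" "\<epsilon>' \<in> carrier E"
    then show "\<gamma> \<circ> H \<epsilon>' \<circ> H \<epsilon> = \<gamma> \<circ> H (\<epsilon> \<otimes>\<^bsub>E\<^esub> \<epsilon>')"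
      by (simp add: fun_eq_iff comp E.m_comm)
  qed (simp add: fun_eq_iff one)
qed

(* K' is the image of C x K for a compact neighbourhood C of eps0, and U is
   shrunk by the tube lemma so that gamma0 (H eps x) varies by less than e/2. *)
lemma dual_action_local_estimate:
  fixes H :: "real \<Rightarrow> 'g::topological_ab_group_add \<Rightarrow> 'g"
  assumes lc: "locally_compact_space (top_of_set (carrier E))"
    and cH: "continuous_on (carrier E \<times> UNIV) (\<lambda>(\<epsilon>, x). H \<epsilon> x)"
    and dual: "\<And>\<epsilon> \<gamma>. \<epsilon> \<in> carrier E \<Longrightarrow> \<gamma> \<in> dual_group \<Longrightarrow> \<gamma> \<circ> H \<epsilon> \<in> dual_group"
    and \<epsilon>0: "\<epsilon>0 \<in> carrier E" and \<gamma>0: "\<gamma>0 \<in> dual_group" and K: "compact K" and e: "e > 0"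
  obtains U K' where "openin (top_of_set (carrier E)) U" "\<epsilon>0 \<in> U" "compact K'"
    "\<And>\<epsilon> \<gamma>. \<epsilon> \<in> U \<Longrightarrow> \<gamma> \<in> dual_nbhd \<gamma>0 K' (e/2) \<Longrightarrow> \<gamma> \<circ> H \<epsilon> \<in> dual_nbhd (\<gamma>0 \<circ> H \<epsilon>0) K e"
proof -
  obtain U0 C where U0: "openin (top_of_set (carrier E)) U0" "\<epsilon>0 \<in> U0" "U0 \<subseteq> C"
    and C: "compactin (top_of_set (carrier E)) C"
    using lc \<epsilon>0 unfolding locally_compact_space_def by auto
  have "compact C" "C \<subseteq> carrier E" using C by (auto simp: compactin_subtopology)
  define K' where "K' = (\<lambda>(\<epsilon>, x). H \<epsilon> x) ` (C \<times> K)"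
  have "compact K'" unfolding K'_def
    using \<open>compact C\<close> \<open>C \<subseteq> carrier E\<close> K
    by (intro compact_continuous_image continuous_on_subset[OF cH] compact_Times) auto
  have "continuous_on (carrier E \<times> UNIV) (\<lambda>p. \<gamma>0 ((\<lambda>(\<epsilon>, x). H \<epsilon> x) p))"
    using \<gamma>0 by (intro continuous_on_compose2[OF _ cH]) (auto simp: dual_group_def)
  then have cont_K: "continuous_on (carrier E \<times> K) (\<lambda>p. \<gamma>0 ((\<lambda>(\<epsilon>, x). H \<epsilon> x) p))"
    by (rule continuous_on_subset) auto
  obtain N where N: "\<epsilon>0 \<in> N" "open N"
      "\<forall>\<epsilon>\<in>N \<inter> carrier E. \<forall>x\<in>K. dist (\<gamma>0 (H \<epsilon> x)) (\<gamma>0 (H \<epsilon>0 x)) \<le> e/4"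
    by (rule continuous_on_prod_compactE[OF cont_K K \<epsilon>0, where e="e/4"]) (use e in simp_all)
  show ?thesis
  proof
    show "openin (top_of_set (carrier E)) (U0 \<inter> N)" using U0(1) N(2) by (rule openin_Int_open)
    show "\<epsilon>0 \<in> U0 \<inter> N" using U0(2) N(1) by blast
    show "compact K'" by fact
    fix \<epsilon> \<gamma> assume \<epsilon>: "\<epsilon> \<in> U0 \<inter> N" and \<gamma>: "\<gamma> \<in> dual_nbhd \<gamma>0 K' (e/2)"
    have \<epsilon>E: "\<epsilon> \<in> carrier E" using \<epsilon> U0(3) \<open>C \<subseteq> carrier E\<close> by blast
    have "cmod (\<gamma> (H \<epsilon> x) - \<gamma>0 (H \<epsilon>0 x)) < e" if x: "x \<in> K" for x
    proof -
      have "H \<epsilon> x \<in> K'" unfolding K'_def using \<epsilon> U0(3) x by force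
      then have "cmod (\<gamma> (H \<epsilon> x) - \<gamma>0 (H \<epsilon> x)) < e/2" using \<gamma> by (simp add: dual_nbhd_def)
      moreover have "cmod (\<gamma>0 (H \<epsilon> x) - \<gamma>0 (H \<epsilon>0 x)) \<le> e/4"
        using N(3) \<epsilon> \<epsilon>E x by (simp add: dist_norm)
      moreover have "cmod (\<gamma> (H \<epsilon> x) - \<gamma>0 (H \<epsilon>0 x))
          \<le> cmod (\<gamma> (H \<epsilon> x) - \<gamma>0 (H \<epsilon> x)) + cmod (\<gamma>0 (H \<epsilon> x) - \<gamma>0 (H \<epsilon>0 x))"
        using norm_triangle_ineq[of "\<gamma> (H \<epsilon> x) - \<gamma>0 (H \<epsilon> x)" "\<gamma>0 (H \<epsilon> x) - \<gamma>0 (H \<epsilon>0 x)"] by simp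
      ultimately show ?thesis using e by linarith
    qed
    moreover have "\<gamma> \<circ> H \<epsilon> \<in> dual_group" using dual \<epsilon>E \<gamma> by (simp add: dual_nbhd_def)
    ultimately show "\<gamma> \<circ> H \<epsilon> \<in> dual_nbhd (\<gamma>0 \<circ> H \<epsilon>0) K e" by (simp add: dual_nbhd_def)
  qed
qed

lemma dual_action_continuous:
  fixes H :: "real \<Rightarrow> 'g::topological_ab_group_add \<Rightarrow> 'g"
  assumes lc: "locally_compact_space (top_of_set (carrier E))"
    and cH: "continuous_on (carrier E \<times> UNIV) (\<lambda>(\<epsilon>, x). H \<epsilon> x)"
    and dual: "\<And>\<epsilon> \<gamma>. \<epsilon> \<in> carrier E \<Longrightarrow> \<gamma> \<in> dual_group \<Longrightarrow> \<gamma> \<circ> H \<epsilon> \<in> dual_group"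
  shows "continuous_map (prod_topology (top_of_set (carrier E)) dual_topology) dual_topology
           (\<lambda>(\<epsilon>, \<gamma>). \<gamma> \<circ> H \<epsilon>)"
  unfolding continuous_map_def
proof (intro conjI allI impI)
  let ?X = "prod_topology (top_of_set (carrier E)) dual_topology"
  have topX: "topspace ?X = carrier E \<times> dual_group" by (simp add: topspace_dual_topology)
  show "(\<lambda>(\<epsilon>, \<gamma>). \<gamma> \<circ> H \<epsilon>) \<in> topspace ?X \<rightarrow> topspace dual_topology"
    using dual by (auto simp: topX topspace_dual_topology)
  fix V :: "('g \<Rightarrow> complex) set" assume V: "openin dual_topology V"
  show "openin ?X {p \<in> topspace ?X. (case p of (\<epsilon>, \<gamma>) \<Rightarrow> \<gamma> \<circ> H \<epsilon>) \<in> V}"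
  proof (subst openin_subopen, safe)
    fix \<epsilon>0 \<gamma>0 assume p: "(\<epsilon>0, \<gamma>0) \<in> topspace ?X" "\<gamma>0 \<circ> H \<epsilon>0 \<in> V"
    then have \<epsilon>0: "\<epsilon>0 \<in> carrier E" and \<gamma>0: "\<gamma>0 \<in> dual_group" by (auto simp: topspace_dual_topology)
    obtain K e where K: "compact K" and e: "e > 0" and KeV: "dual_nbhd (\<gamma>0 \<circ> H \<epsilon>0) K e \<subseteq> V"
      using V p(2) unfolding openin_dual_topology by blast
    obtain U K' where U: "openin (top_of_set (carrier E)) U" "\<epsilon>0 \<in> U" and K': "compact K'"
      and est: "\<And>\<epsilon> \<gamma>. \<epsilon> \<in> U \<Longrightarrow> \<gamma> \<in> dual_nbhd \<gamma>0 K' (e/2) \<Longrightarrow> \<gamma> \<circ> H \<epsilon> \<in> dual_nbhd (\<gamma>0 \<circ> H \<epsilon>0) K e"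
      using dual_action_local_estimate[OF lc cH dual \<epsilon>0 \<gamma>0 K e] by blast
    have e2: "e/2 > 0" using e by simp
    show "\<exists>T. openin ?X T \<and> (\<epsilon>0, \<gamma>0) \<in> T \<and> T \<subseteq> {p \<in> topspace ?X. (case p of (\<epsilon>, \<gamma>) \<Rightarrow> \<gamma> \<circ> H \<epsilon>) \<in> V}"
    proof (intro exI conjI)
      show "openin ?X (U \<times> dual_nbhd \<gamma>0 K' (e/2))"
        using U(1) dual_nbhd_openin(1)[OF \<gamma>0 K' e2] by (simp add: openin_prod_Times_iff)
      show "(\<epsilon>0, \<gamma>0) \<in> U \<times> dual_nbhd \<gamma>0 K' (e/2)"
        using U(2) dual_nbhd_openin(2)[OF \<gamma>0 K' e2] by simp
      show "U \<times> dual_nbhd \<gamma>0 K' (e/2) \<subseteq> {p \<in> topspace ?X. (case p of (\<epsilon>, \<gamma>) \<Rightarrow> \<gamma> \<circ> H \<epsilon>) \<in> V}"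
        using est KeV openin_imp_subset[OF U(1)] by (auto simp: topspace_dual_topology dual_nbhd_def)
    qed
  qed
qed

(* An absorptive action by additive maps fixes 0, and 0 is the only point that can be
   absorbing; so every open neighbourhood of 0 absorbs a neighbourhood of any point. *)
lemma additive_absorptive_action_absorbs_to_zero:
  fixes H :: "real \<Rightarrow> 'g::{topological_ab_group_add, t1_space} \<Rightarrow> 'g"
  assumes "group E" and absorptive: "absorptive_action E euclidean H"
    and add: "\<And>\<epsilon> x y. \<epsilon> \<in> carrier E \<Longrightarrow> H \<epsilon> (x + y) = H \<epsilon> x + H \<epsilon> y"
    and V: "open V" "0 \<in> V"
  shows "\<exists>W \<alpha>. open W \<and> x \<in> W \<and> \<alpha> \<in> carrier E \<and>
           (\<forall>\<epsilon>\<in>carrier E. \<epsilon> \<le> \<alpha> \<longrightarrow> H (inv\<^bsub>E\<^esub> \<epsilon>) ` W \<subseteq> V)"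
proof -
  interpret E: group E by fact
  have "\<exists>\<omega>\<in>topspace euclidean. \<forall>V. (\<exists>W. openin euclidean W \<and> \<omega> \<in> W \<and> W \<subseteq> V) \<and> V \<subseteq> topspace euclidean \<longrightarrow>
      (\<forall>x\<in>topspace euclidean. \<exists>U \<alpha>. (\<exists>W. openin euclidean W \<and> x \<in> W \<and> W \<subseteq> U) \<and>
           U \<subseteq> topspace euclidean \<and> \<alpha> \<in> carrier E \<and>
           (\<forall>\<epsilon>\<in>carrier E. \<epsilon> \<le> \<alpha> \<longrightarrow> H (inv\<^bsub>E\<^esub> \<epsilon>) ` U \<subseteq> V))"
    using absorptive unfolding absorptive_action_def by (rule conjunct2)
  then obtain \<omega> where \<omega>: "\<forall>V. (\<exists>W. openin euclidean W \<and> \<omega> \<in> W \<and> W \<subseteq> V) \<and> V \<subseteq> topspace euclidean \<longrightarrow>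
      (\<forall>x\<in>topspace euclidean. \<exists>U \<alpha>. (\<exists>W. openin euclidean W \<and> x \<in> W \<and> W \<subseteq> U) \<and>
           U \<subseteq> topspace euclidean \<and> \<alpha> \<in> carrier E \<and>
           (\<forall>\<epsilon>\<in>carrier E. \<epsilon> \<le> \<alpha> \<longrightarrow> H (inv\<^bsub>E\<^esub> \<epsilon>) ` U \<subseteq> V))"
    by (rule bexE)
  have absorbs: "\<exists>W \<alpha>. open W \<and> y \<in> W \<and> \<alpha> \<in> carrier E \<and>
                   (\<forall>\<epsilon>\<in>carrier E. \<epsilon> \<le> \<alpha> \<longrightarrow> H (inv\<^bsub>E\<^esub> \<epsilon>) ` W \<subseteq> V')"
    if "open V'" "\<omega> \<in> V'" for V' y
  proof -
    have V': "(\<exists>W. openin euclidean W \<and> \<omega> \<in> W \<and> W \<subseteq> V') \<and> V' \<subseteq> topspace euclidean"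
      using that by auto
    obtain U \<alpha> W where "open W" "y \<in> W" "W \<subseteq> U" "\<alpha> \<in> carrier E"
        "\<forall>\<epsilon>\<in>carrier E. \<epsilon> \<le> \<alpha> \<longrightarrow> H (inv\<^bsub>E\<^esub> \<epsilon>) ` U \<subseteq> V'"
      using \<omega>[rule_format, OF V', of y] by auto
    then show ?thesis by (intro exI[of _ W] exI[of _ \<alpha>]) blast
  qed
  have H0: "H \<epsilon> 0 = 0" if "\<epsilon> \<in> carrier E" for \<epsilon>
    using add[OF that, of 0 0] by simp
  have "\<omega> = 0"
  proof (rule ccontr)
    assume "\<omega> \<noteq> 0"
    then obtain W \<alpha> where "0 \<in> W" "\<alpha> \<in> carrier E"
        "\<forall>\<epsilon>\<in>carrier E. \<epsilon> \<le> \<alpha> \<longrightarrow> H (inv\<^bsub>E\<^esub> \<epsilon>) ` W \<subseteq> - {0}"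
      using absorbs[of "- {0}" 0] by auto
    then have "H (inv\<^bsub>E\<^esub> \<alpha>) 0 \<noteq> 0" by blast
    then show False using H0 \<open>\<alpha> \<in> carrier E\<close> by simp
  qed
  then show ?thesis using absorbs V by blast
qed

(* By compactness the absorption into a neighbourhood of 0 is uniform on compact sets:
   take the smallest of the finitely many thresholds of a finite subcover. *)
lemma additive_absorptive_action_absorbs_compact:
  fixes H :: "real \<Rightarrow> 'g::{topological_ab_group_add, t1_space} \<Rightarrow> 'g"
  assumes "group E" and "absorptive_action E euclidean H"
    and "\<And>\<epsilon> x y. \<epsilon> \<in> carrier E \<Longrightarrow> H \<epsilon> (x + y) = H \<epsilon> x + H \<epsilon> y"
    and K: "compact K" and V: "open V" "0 \<in> V"
  shows "\<exists>\<alpha>\<in>carrier E. \<forall>\<epsilon>\<in>carrier E. \<epsilon> \<le> \<alpha> \<longrightarrow> H (inv\<^bsub>E\<^esub> \<epsilon>) ` K \<subseteq> V"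
proof -
  interpret E: group E by fact
  obtain W a where Wa: "\<And>x. open (W x) \<and> x \<in> W x \<and> a x \<in> carrier E \<and>
      (\<forall>\<epsilon>\<in>carrier E. \<epsilon> \<le> a x \<longrightarrow> H (inv\<^bsub>E\<^esub> \<epsilon>) ` W x \<subseteq> V)"
    using additive_absorptive_action_absorbs_to_zero[OF assms(1-3) V] by metis
  obtain D where D: "D \<subseteq> K" "finite D" "K \<subseteq> (\<Union>x\<in>D. W x)"
    using compactE_image[OF K, of K W] Wa by blast
  define \<alpha> where "\<alpha> = Min (insert \<one>\<^bsub>E\<^esub> (a ` D))"
  have fin: "finite (insert \<one>\<^bsub>E\<^esub> (a ` D))" using D by simp
  have "insert \<one>\<^bsub>E\<^esub> (a ` D) \<subseteq> carrier E" using Wa by auto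
  then have "\<alpha> \<in> carrier E"
    using Min_in[OF fin insert_not_empty] unfolding \<alpha>_def by blast
  moreover have "H (inv\<^bsub>E\<^esub> \<epsilon>) ` K \<subseteq> V" if \<epsilon>: "\<epsilon> \<in> carrier E" "\<epsilon> \<le> \<alpha>" for \<epsilon>
  proof
    fix y assume "y \<in> H (inv\<^bsub>E\<^esub> \<epsilon>) ` K"
    then obtain x z where y: "y = H (inv\<^bsub>E\<^esub> \<epsilon>) x" and z: "z \<in> D" "x \<in> W z" using D by blast
    have "\<alpha> \<le> a z" unfolding \<alpha>_def using fin z by (intro Min_le) auto
    then have "H (inv\<^bsub>E\<^esub> \<epsilon>) ` W z \<subseteq> V" using Wa[of z] \<epsilon> by auto
    then show "y \<in> V" using y z by blast
  qed
  ultimately show ?thesis by blast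
qed

(* Pulling back by H (inv eps) for all small eps maps a whole basic neighbourhood of a
   character gamma into the basic neighbourhood of the trivial character on K: choose a
   compact neighbourhood C of 0 on which gamma is e/2-close to 1 and absorb K into it. *)
lemma dual_action_absorbs_into_trivial_nbhd:
  fixes H :: "real \<Rightarrow> 'g::topological_ab_group_add \<Rightarrow> 'g"
  assumes lcG: "locally_compact_space (euclidean :: 'g topology)"
    and "group E"
    and dual: "\<And>\<epsilon> \<gamma>. \<epsilon> \<in> carrier E \<Longrightarrow> \<gamma> \<in> dual_group \<Longrightarrow> \<gamma> \<circ> H \<epsilon> \<in> dual_group"
    and absorb: "\<And>K V. compact K \<Longrightarrow> open V \<Longrightarrow> 0 \<in> V \<Longrightarrow>
                   \<exists>\<alpha>\<in>carrier E. \<forall>\<epsilon>\<in>carrier E. \<epsilon> \<le> \<alpha> \<longrightarrow> H (inv\<^bsub>E\<^esub> \<epsilon>) ` K \<subseteq> V"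
    and \<gamma>: "\<gamma> \<in> dual_group" and K: "compact K" and e: "e > 0"
  obtains C \<alpha> where "compact C" "\<alpha> \<in> carrier E"
    "\<And>\<epsilon> \<psi>. \<epsilon> \<in> carrier E \<Longrightarrow> \<epsilon> \<le> \<alpha> \<Longrightarrow> \<psi> \<in> dual_nbhd \<gamma> C (e/2) \<Longrightarrow>
       \<psi> \<circ> H (inv\<^bsub>E\<^esub> \<epsilon>) \<in> dual_nbhd (\<lambda>_. 1) K e"
proof -
  interpret E: group E by fact
  obtain W0 C0 :: "'g set" where "open W0" "compact C0" "0 \<in> W0" "W0 \<subseteq> C0"
    using lcG unfolding locally_compact_space_def by (metis compactin_euclidean_iff open_openin UNIV_I topspace_euclidean)
  have c\<gamma>: "continuous_on UNIV \<gamma>" using \<gamma> by (simp add: dual_group_def)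
  define V where "V = W0 \<inter> {y. cmod (\<gamma> y - 1) < e/2}"
  define C where "C = C0 \<inter> {y. cmod (\<gamma> y - 1) \<le> e/2}"
  have "open V" unfolding V_def
    by (intro open_Int \<open>open W0\<close> open_Collect_less continuous_intros continuous_on_subset[OF c\<gamma>]) auto
  moreover have "0 \<in> V" using \<open>0 \<in> W0\<close> dual_group_zero[OF \<gamma>] e by (simp add: V_def)
  ultimately obtain \<alpha> where \<alpha>: "\<alpha> \<in> carrier E" "\<forall>\<epsilon>\<in>carrier E. \<epsilon> \<le> \<alpha> \<longrightarrow> H (inv\<^bsub>E\<^esub> \<epsilon>) ` K \<subseteq> V"
    using absorb[OF K] by blast
  show ?thesis
  proof
    show "compact C" unfolding C_def
      by (intro compact_Int_closed \<open>compact C0\<close> closed_Collect_le continuous_intros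
          continuous_on_subset[OF c\<gamma>]) auto
    show "\<alpha> \<in> carrier E" by fact
    fix \<epsilon> \<psi> assume \<epsilon>: "\<epsilon> \<in> carrier E" "\<epsilon> \<le> \<alpha>" and \<psi>: "\<psi> \<in> dual_nbhd \<gamma> C (e/2)"
    have "cmod (\<psi> (H (inv\<^bsub>E\<^esub> \<epsilon>) x) - 1) < e" if x: "x \<in> K" for x
    proof -
      let ?y = "H (inv\<^bsub>E\<^esub> \<epsilon>) x"
      have "?y \<in> V" using \<alpha>(2) \<epsilon> x by blast
      then have "?y \<in> C" and close\<gamma>: "cmod (\<gamma> ?y - 1) < e/2"
        using \<open>W0 \<subseteq> C0\<close> by (auto simp: V_def C_def)
      then have "cmod (\<psi> ?y - \<gamma> ?y) < e/2" using \<psi> by (simp add: dual_nbhd_def)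
      moreover have "cmod (\<psi> ?y - 1) \<le> cmod (\<psi> ?y - \<gamma> ?y) + cmod (\<gamma> ?y - 1)"
        using norm_triangle_ineq[of "\<psi> ?y - \<gamma> ?y" "\<gamma> ?y - 1"] by simp
      ultimately show ?thesis using close\<gamma> by linarith
    qed
    moreover have "\<psi> \<circ> H (inv\<^bsub>E\<^esub> \<epsilon>) \<in> dual_group" using dual \<epsilon> \<psi> by (simp add: dual_nbhd_def)
    ultimately show "\<psi> \<circ> H (inv\<^bsub>E\<^esub> \<epsilon>) \<in> dual_nbhd (\<lambda>_. 1) K e" by (simp add: dual_nbhd_def)
  qed
qed

lemma dual_action_absorptive:
  fixes H :: "real \<Rightarrow> 'g::topological_ab_group_add \<Rightarrow> 'g"
  assumes lcG: "locally_compact_space (euclidean :: 'g topology)"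
    and "group E" and act: "is_action E dual_topology (\<lambda>\<epsilon> \<gamma>. \<gamma> \<circ> H \<epsilon>)"
    and dual: "\<And>\<epsilon> \<gamma>. \<epsilon> \<in> carrier E \<Longrightarrow> \<gamma> \<in> dual_group \<Longrightarrow> \<gamma> \<circ> H \<epsilon> \<in> dual_group"
    and absorb: "\<And>K V. compact K \<Longrightarrow> open V \<Longrightarrow> 0 \<in> V \<Longrightarrow>
                   \<exists>\<alpha>\<in>carrier E. \<forall>\<epsilon>\<in>carrier E. \<epsilon> \<le> \<alpha> \<longrightarrow> H (inv\<^bsub>E\<^esub> \<epsilon>) ` K \<subseteq> V"
  shows "absorptive_action E dual_topology (\<lambda>\<epsilon> \<gamma>. \<gamma> \<circ> H \<epsilon>)"
  unfolding absorptive_action_def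
proof (intro conjI act bexI[of _ "\<lambda>_. 1"] allI impI ballI)
  show "(\<lambda>_. 1) \<in> topspace dual_topology"
    by (simp add: topspace_dual_topology const_one_dual_group)
  fix V :: "('g \<Rightarrow> complex) set" and \<gamma> :: "'g \<Rightarrow> complex"
  assume "(\<exists>W. openin dual_topology W \<and> (\<lambda>_. 1) \<in> W \<and> W \<subseteq> V) \<and> V \<subseteq> topspace dual_topology"
    and "\<gamma> \<in> topspace dual_topology"
  then have \<gamma>: "\<gamma> \<in> dual_group"
    and "\<exists>W. openin dual_topology W \<and> (\<lambda>_. 1) \<in> W \<and> W \<subseteq> V"
    by (simp_all add: topspace_dual_topology)
  then obtain K :: "'g set" and e where K: "compact K" and e: "e > 0"
      and KeV: "dual_nbhd (\<lambda>_. 1) K e \<subseteq> V"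
    unfolding openin_dual_topology by blast
  obtain C \<alpha> where C: "compact C" and \<alpha>: "\<alpha> \<in> carrier E"
    and pull: "\<And>\<epsilon> \<psi>. \<epsilon> \<in> carrier E \<Longrightarrow> \<epsilon> \<le> \<alpha> \<Longrightarrow> \<psi> \<in> dual_nbhd \<gamma> C (e/2) \<Longrightarrow>
                 \<psi> \<circ> H (inv\<^bsub>E\<^esub> \<epsilon>) \<in> dual_nbhd (\<lambda>_. 1) K e"
    using dual_action_absorbs_into_trivial_nbhd[OF lcG \<open>group E\<close> dual absorb \<gamma> K e] by blast
  have e2: "e/2 > 0" using e by simp
  show "\<exists>U \<alpha>. (\<exists>W. openin dual_topology W \<and> \<gamma> \<in> W \<and> W \<subseteq> U) \<and> U \<subseteq> topspace dual_topology \<and>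
          \<alpha> \<in> carrier E \<and> (\<forall>\<epsilon>\<in>carrier E. \<epsilon> \<le> \<alpha> \<longrightarrow> (\<lambda>\<gamma>. \<gamma> \<circ> H (inv\<^bsub>E\<^esub> \<epsilon>)) ` U \<subseteq> V)"
  proof (rule exI[of _ "dual_nbhd \<gamma> C (e/2)"], rule exI[of _ \<alpha>], intro conjI ballI impI)
    show "\<exists>W. openin dual_topology W \<and> \<gamma> \<in> W \<and> W \<subseteq> dual_nbhd \<gamma> C (e/2)"
      using dual_nbhd_openin[OF \<gamma> C e2] by blast
    show "dual_nbhd \<gamma> C (e/2) \<subseteq> topspace dual_topology"
      by (auto simp: dual_nbhd_def topspace_dual_topology)
    show "\<alpha> \<in> carrier E" by fact
    fix \<epsilon> assume \<epsilon>: "\<epsilon> \<in> carrier E" "\<epsilon> \<le> \<alpha>"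
    show "(\<lambda>\<gamma>. \<gamma> \<circ> H (inv\<^bsub>E\<^esub> \<epsilon>)) ` dual_nbhd \<gamma> C (e/2) \<subseteq> V"
      using KeV pull[OF \<epsilon>] by blast
  qed
qed

theorem proposition5p2:
  fixes E :: "real monoid"
    and H :: "real \<Rightarrow> 'g::{topological_ab_group_add, t2_space} \<Rightarrow> 'g"
  assumes "locally_compact_space (euclidean :: 'g topology)"
    and "\<exists>x::'g. x \<noteq> 0"
    and "R_group E"
    and "continuous_action E euclidean H"
    and "absorptive_action E euclidean H"
    and "\<forall>\<epsilon>\<in>carrier E. \<forall>x y. H \<epsilon> (x + y) = H \<epsilon> x + H \<epsilon> y"
  shows "continuous_action E dual_topology (\<lambda>\<epsilon> \<gamma>. \<gamma> \<circ> H \<epsilon>) \<and>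
         absorptive_action E dual_topology (\<lambda>\<epsilon> \<gamma>. \<gamma> \<circ> H \<epsilon>)"
proof -
  have "comm_group E" and lcE: "locally_compact_space (top_of_set (carrier E))"
    using assms(3) unfolding R_group_def by auto
  interpret E: comm_group E by fact
  have act: "is_action E euclidean H"
    and "continuous_map (prod_topology (top_of_set (carrier E)) euclidean) euclidean (\<lambda>(\<epsilon>, x). H \<epsilon> x)"
    using assms(4) unfolding continuous_action_def by auto
  then have cH: "continuous_on (carrier E \<times> UNIV) (\<lambda>(\<epsilon>, x). H \<epsilon> x)"
    by (metis prod_topology_subtopology_eu subtopology_UNIV continuous_map_iff_continuous)
  have add: "\<And>\<epsilon> x y. \<epsilon> \<in> carrier E \<Longrightarrow> H \<epsilon> (x + y) = H \<epsilon> x + H \<epsilon> y"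
    using assms(6) by blast
  have dual: "\<gamma> \<circ> H \<epsilon> \<in> dual_group" if "\<epsilon> \<in> carrier E" "\<gamma> \<in> dual_group" for \<epsilon> \<gamma>
  proof -
    have "continuous_on UNIV (\<lambda>x. (\<lambda>(\<epsilon>, x). H \<epsilon> x) (\<epsilon>, x))"
      using that(1) by (intro continuous_on_compose2[OF cH]) (auto intro!: continuous_intros)
    then have "continuous_on UNIV (H \<epsilon>)" by simp
    then show ?thesis using add[OF that(1)] by (rule dual_group_comp[OF that(2)])
  qed
  have "is_action E dual_topology (\<lambda>\<epsilon> \<gamma>. \<gamma> \<circ> H \<epsilon>)"
    by (rule dual_action_is_action[OF \<open>comm_group E\<close> act dual])
  moreover have "continuous_map (prod_topology (top_of_set (carrier E)) dual_topology) dual_topology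
                   (\<lambda>(\<epsilon>, \<gamma>). \<gamma> \<circ> H \<epsilon>)"
    by (rule dual_action_continuous[OF lcE cH dual])
  moreover have "absorptive_action E dual_topology (\<lambda>\<epsilon> \<gamma>. \<gamma> \<circ> H \<epsilon>)"
    using dual_action_absorptive[OF assms(1) E.is_group calculation(1) dual
        additive_absorptive_action_absorbs_compact[OF E.is_group assms(5) add]] .
  ultimately show ?thesis unfolding continuous_action_def by blast
qed

end
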